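(* Let $\Gamma$ be an $n$-dimensional crystallographic group with holonomy group $F\subseteq\mathrm{GL}_n(\mathbb{Z})$. If the normaliser $N_{\mathrm{GL}_n(\mathbb{Z})}(F)$ is finite, then the Reidemeister spectrum $\mathrm{Spec}_R(\Gamma)$ is finite.
   Context: An $n$-dimensional crystallographic group is a discrete cocompact subgroup of $\mathbb{R}^n\rtimes O(n)$; it is realised inside $\mathrm{Aff}(\mathbb{R}^n)=\mathbb{R}^n\rtimes\mathrm{GL}_n(\mathbb{R})$ such that its subgroup of pure translations is exactly $\{(z,I_n)\mid z\in\mathbb{Z}^n\}$. The holonomy group is $F=\{A\mid\exists a:\ (a,A)\in\Gamma\}\subseteq\mathrm{GL}_n(\mathbb{Z})$. For an automorphism $\varphi$ of a group $G$, $R(\varphi)\in\{1,2,\dots\}\cup\{\infty\}$ is the number of classes of the relation $g\sim g'\iff\exists h\in G: g=hg'\varphi(h)^{-1}$, and $\mathrm{Spec}_R(G)=\{R(\varphi)\mid\varphi\in\mathrm{Aut}(G)\}$. *)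

theory Defs
  imports "HOL-Analysis.Analysis" "HOL-Algebra.Group" "HOL-Library.Extended_Nat"
begin

text \<open>Affine maps of R^n: pairs (a, A) acting by x \<mapsto> a + A x.\<close>
type_synonym 'n aff = "(real^'n) \<times> (real^'n^'n)"

definition aff_mult :: "'n::finite aff \<Rightarrow> 'n aff \<Rightarrow> 'n aff" where
  "aff_mult g h = (fst g + snd g *v fst h, snd g ** snd h)"

definition aff_inv :: "'n::finite aff \<Rightarrow> 'n aff" where
  "aff_inv g = (- (matrix_inv (snd g) *v fst g), matrix_inv (snd g))"

definition aff_apply :: "'n::finite aff \<Rightarrow> real^'n \<Rightarrow> real^'n" where
  "aff_apply g x = fst g + snd g *v x"

definition aff_group :: "'n::finite aff monoid" where
  "aff_group = \<lparr>carrier = {g. invertible (snd g)}, mult = aff_mult, one = (0, mat 1)\<rparr>"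

definition discrete_set :: "'a::metric_space set \<Rightarrow> bool" where
  "discrete_set S \<longleftrightarrow> (\<forall>x\<in>S. \<exists>e>0. \<forall>y\<in>S. dist y x < e \<longrightarrow> y = x)"

definition cocompact_aff :: "'n::finite aff set \<Rightarrow> bool" where
  "cocompact_aff G \<longleftrightarrow> (\<exists>K. compact K \<and> (\<Union>g\<in>G. aff_apply g ` K) = UNIV)"

definition crystallographic_iso :: "'n::finite aff set \<Rightarrow> bool" where
  "crystallographic_iso G \<longleftrightarrow> subgroup G aff_group \<and>
      (\<forall>g\<in>G. orthogonal_matrix (snd g)) \<and> discrete_set G \<and> cocompact_aff G"

definition int_vec :: "real^'n \<Rightarrow> bool" where
  "int_vec z \<longleftrightarrow> (\<forall>i. z $ i \<in> \<int>)"

definition int_mat :: "real^'n^'m \<Rightarrow> bool" where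
  "int_mat A \<longleftrightarrow> (\<forall>i j. A $ i $ j \<in> \<int>)"

text \<open>An n-dimensional crystallographic group realised in Aff(R^n) (i.e. affinely conjugate
  to a discrete cocompact subgroup of R^n \<rtimes> O(n)) whose pure translations are exactly Z^n.\<close>
definition crystallographic :: "'n::finite aff set \<Rightarrow> bool" where
  "crystallographic \<Gamma> \<longleftrightarrow> subgroup \<Gamma> aff_group \<and>
     (\<exists>g\<in>carrier aff_group. crystallographic_iso ((\<lambda>\<gamma>. aff_mult g (aff_mult \<gamma> (aff_inv g))) ` \<Gamma>)) \<and>
     {\<gamma>\<in>\<Gamma>. snd \<gamma> = mat 1} = {(z, mat 1) | z. int_vec z}"

definition holonomy :: "'n::finite aff set \<Rightarrow> (real^'n^'n) set" where
  "holonomy \<Gamma> = {A. \<exists>a. (a, A) \<in> \<Gamma>}"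

definition GL_Z :: "(real^'n^'n::finite) set" where
  "GL_Z = {P. int_mat P \<and> invertible P \<and> int_mat (matrix_inv P)}"

definition normaliser_GLZ :: "(real^'n^'n::finite) set \<Rightarrow> (real^'n^'n) set" where
  "normaliser_GLZ F = {P\<in>GL_Z. (\<lambda>A. P ** A ** matrix_inv P) ` F = F}"

definition reid_classes :: "('a, 'b) monoid_scheme \<Rightarrow> ('a \<Rightarrow> 'a) \<Rightarrow> 'a set set" where
  "reid_classes G \<phi> = (\<lambda>g. {g'\<in>carrier G. \<exists>h\<in>carrier G.
        g' = h \<otimes>\<^bsub>G\<^esub> g \<otimes>\<^bsub>G\<^esub> inv\<^bsub>G\<^esub> (\<phi> h)}) ` carrier G"

definition reid_number :: "('a, 'b) monoid_scheme \<Rightarrow> ('a \<Rightarrow> 'a) \<Rightarrow> enat" where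
  "reid_number G \<phi> = (if finite (reid_classes G \<phi>) then enat (card (reid_classes G \<phi>)) else \<infinity>)"

definition reid_spectrum :: "('a, 'b) monoid_scheme \<Rightarrow> enat set" where
  "reid_spectrum G = reid_number G ` iso G G"

end

(* The holonomy group F is finite: conjugated into R^n x| O(n) its elements become orthogonal,
   so the integer matrices in F have uniformly bounded entries. Conjugating a translation (z, 1)
   by (a, A) gives (A z, 1), so lattice elements have finite conjugacy classes, whereas
   conjugating an element (b, B) with B <> 1 by the translations (v, 1) produces the infinitely
   many elements (v + b - B v, B). Hence every automorphism phi maps the lattice Z^n onto itself
   and acts on it by an integer matrix D, which normalises F.

   Twisting only by lattice elements, g ~ l g phi(l)^-1 with l in Z^n, refines the Reidemeister
   relation; as Z^n has finite index, each Reidemeister class is a union of finitely many of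
   these finer classes, and the finer classes depend on phi only through D. So R(phi) is either
   infinite or at most the number of lattice-twisted classes for D, and D ranges over the
   finite normaliser. *)

theory Submission
  imports Defs
begin

section \<open>Matrices\<close>

lemma matrix_inv_right: "invertible (A :: real^'n^'n) \<Longrightarrow> A ** matrix_inv A = mat 1"
  and matrix_inv_left: "invertible (A :: real^'n^'n) \<Longrightarrow> matrix_inv A ** A = mat 1"
  unfolding matrix_inv_def invertible_def by (metis (mono_tags, lifting) someI_ex)+

lemma invertible_matrix_inv: "invertible (A :: real^'n^'n) \<Longrightarrow> invertible (matrix_inv A)"
  using matrix_inv_left matrix_inv_right unfolding invertible_def by blast

lemma matrix_inv_unique:
  fixes A B :: "real^'n^'n"
  assumes "A ** B = mat 1"
  shows "matrix_inv A = B"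
proof -
  have "invertible A" using assms invertible_right_inverse by blast
  have "matrix_inv A = matrix_inv A ** (A ** B)" by (simp add: assms)
  also have "\<dots> = B" by (metis matrix_mul_assoc matrix_inv_left[OF \<open>invertible A\<close>] matrix_mul_lid)
  finally show ?thesis .
qed

lemma matrix_inv_mat_1 [simp]: "matrix_inv (mat 1 :: real^'n^'n) = mat 1"
  by (rule matrix_inv_unique) simp

lemma matrix_eq_on_axes: "(\<And>j. (A :: real^'n^'m) *v axis j 1 = B *v axis j 1) \<Longrightarrow> A = B"
  by (simp add: matrix_vector_mult_basis column_def vec_eq_iff)

lemma onorm_orthogonal_matrix_le: "orthogonal_matrix Q \<Longrightarrow> onorm ((*v) (Q :: real^'n^'n)) \<le> 1"
  by (rule onorm_le)
     (simp add: orthogonal_transformation_norm orthogonal_transformation_matrix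
        matrix_of_matrix_vector_mul)

lemma onorm_matrix_mul_le:
  fixes A :: "real^'n^'m" and B :: "real^'k^'n"
  shows "onorm ((*v) (A ** B)) \<le> onorm ((*v) A) * onorm ((*v) B)"
proof -
  have "(*v) (A ** B) = (*v) A \<circ> (*v) B"
    by (simp add: fun_eq_iff matrix_vector_mul_assoc)
  then show ?thesis by (simp add: onorm_compose matrix_vector_mul_bounded_linear)
qed

lemma abs_entry_le_if_conj_orthogonal:
  fixes A P :: "real^'n^'n"
  assumes P: "invertible P" and orth: "orthogonal_matrix (P ** A ** matrix_inv P)"
  shows "\<bar>A $ i $ j\<bar> \<le> onorm ((*v) (matrix_inv P)) * onorm ((*v) P)"
proof -
  define Q where "Q = P ** A ** matrix_inv P"
  have "A = matrix_inv P ** (Q ** P)"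
    unfolding Q_def by (simp add: matrix_mul_assoc matrix_inv_left[OF P])
      (simp add: matrix_mul_assoc[symmetric] matrix_inv_left[OF P])
  then have "\<bar>A $ i $ j\<bar> \<le> onorm ((*v) (matrix_inv P ** (Q ** P)))"
    using matrix_component_le_onorm[of A i j] by simp
  also have "\<dots> \<le> onorm ((*v) (matrix_inv P)) * (onorm ((*v) Q) * onorm ((*v) P))"
    by (intro order_trans[OF onorm_matrix_mul_le] mult_left_mono onorm_matrix_mul_le
        onorm_pos_le matrix_vector_mul_bounded_linear)
  also have "\<dots> \<le> onorm ((*v) (matrix_inv P)) * (1 * onorm ((*v) P))"
    using orth unfolding Q_def[symmetric]
    by (intro mult_left_mono mult_right_mono onorm_orthogonal_matrix_le onorm_pos_le
        matrix_vector_mul_bounded_linear)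
  finally show ?thesis by simp
qed

lemma int_vec_add: "int_vec z \<Longrightarrow> int_vec w \<Longrightarrow> int_vec (z + w)"
  and int_vec_minus: "int_vec z \<Longrightarrow> int_vec (- z)"
  and int_vec_scaleR: "int_vec z \<Longrightarrow> c \<in> \<int> \<Longrightarrow> int_vec (c *\<^sub>R z)"
  and int_vec_axis: "int_vec (axis j 1)"
  by (auto simp: int_vec_def axis_def)

lemma int_vec_zero: "int_vec 0"
  by (simp add: int_vec_def)

lemma int_vec_sum: "(\<And>i. i \<in> S \<Longrightarrow> int_vec (f i)) \<Longrightarrow> int_vec (sum f S)"
  by (auto simp: int_vec_def sum_component intro: Ints_sum)

lemma int_mat_mult_int_vec: "int_mat A \<Longrightarrow> int_vec z \<Longrightarrow> int_vec ((A :: real^'n::finite^'m) *v z)"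
  unfolding int_mat_def int_vec_def matrix_vector_mult_def by (auto intro!: Ints_sum Ints_mult)

lemma finite_bounded_int_mat:
  "finite {A :: real^'n::finite^'m::finite. int_mat A \<and> (\<forall>i j. \<bar>A $ i $ j\<bar> \<le> c)}"
proof -
  define S where "S = real_of_int ` {-\<lceil>c\<rceil>..\<lceil>c\<rceil>}"
  have "{A :: real^'n^'m. int_mat A \<and> (\<forall>i j. \<bar>A $ i $ j\<bar> \<le> c)}
      \<subseteq> (\<lambda>f. \<chi> i j. f i j) ` (PiE UNIV (\<lambda>_. PiE UNIV (\<lambda>_. S)))"
  proof
    fix A :: "real^'n^'m" assume A: "A \<in> {A. int_mat A \<and> (\<forall>i j. \<bar>A $ i $ j\<bar> \<le> c)}"
    have "A $ i $ j \<in> S" for i j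
    proof -
      have "A $ i $ j \<in> \<int>" using A by (simp add: int_mat_def)
      then obtain m where m: "A $ i $ j = of_int m" by (rule Ints_cases)
      have "\<bar>A $ i $ j\<bar> \<le> c" using A by blast
      then have "\<bar>real_of_int m\<bar> \<le> c" by (simp add: m)
      then have "m \<in> {-\<lceil>c\<rceil>..\<lceil>c\<rceil>}" by (simp add: abs_le_iff) linarith
      then show ?thesis using m by (simp add: S_def)
    qed
    then show "A \<in> (\<lambda>f. \<chi> i j. f i j) ` (PiE UNIV (\<lambda>_. PiE UNIV (\<lambda>_. S)))"
      by (intro image_eqI[of _ _ "\<lambda>i j. A $ i $ j"]) (auto simp: vec_eq_iff)
  qed
  moreover have "finite (PiE (UNIV :: 'm set) (\<lambda>_. PiE (UNIV :: 'n set) (\<lambda>_. S)))"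
    by (intro finite_PiE) (auto simp: S_def)
  ultimately show ?thesis by (meson finite_imageI finite_subset)
qed

lemma int_additive_of_int_scaleR:
  fixes \<psi> :: "real^'n::finite \<Rightarrow> real^'m::finite"
  assumes add: "\<And>z w. int_vec z \<Longrightarrow> int_vec w \<Longrightarrow> \<psi> (z + w) = \<psi> z + \<psi> w"
    and v: "int_vec v"
  shows "\<psi> (of_int m *\<^sub>R v) = of_int m *\<^sub>R \<psi> v"
proof (induction m rule: int_induct[where k = 0])
  case base
  show ?case using add[OF int_vec_zero int_vec_zero] by simp
next
  case (step1 i)
  have "\<psi> (of_int (i + 1) *\<^sub>R v) = \<psi> (of_int i *\<^sub>R v + v)" by (simp add: algebra_simps)
  also have "\<dots> = of_int (i + 1) *\<^sub>R \<psi> v"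
    using step1 add[OF int_vec_scaleR[OF v] v] by (simp add: algebra_simps)
  finally show ?case .
next
  case (step2 i)
  have "\<psi> (of_int i *\<^sub>R v) = \<psi> (of_int (i - 1) *\<^sub>R v + v)" by (simp add: algebra_simps)
  also have "\<dots> = \<psi> (of_int (i - 1) *\<^sub>R v) + \<psi> v"
    using add[OF int_vec_scaleR[OF v] v] by simp
  finally show ?case using step2 by (simp add: algebra_simps)
qed

lemma int_additive_sum:
  fixes \<psi> :: "real^'n::finite \<Rightarrow> real^'m::finite"
  assumes add: "\<And>z w. int_vec z \<Longrightarrow> int_vec w \<Longrightarrow> \<psi> (z + w) = \<psi> z + \<psi> w"
    and "finite S" "\<And>i. i \<in> S \<Longrightarrow> int_vec (f i)"
  shows "\<psi> (sum f S) = (\<Sum>i\<in>S. \<psi> (f i))"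
  using assms(2,3)
proof (induction S rule: finite_induct)
  case empty
  show ?case using add[OF int_vec_zero int_vec_zero] by simp
next
  case (insert i S)
  then show ?case by (simp add: add int_vec_sum)
qed

lemma int_additive_eq_matrix:
  fixes \<psi> :: "real^'n::finite \<Rightarrow> real^'m::finite"
  assumes add: "\<And>z w. int_vec z \<Longrightarrow> int_vec w \<Longrightarrow> \<psi> (z + w) = \<psi> z + \<psi> w"
    and int: "\<And>z. int_vec z \<Longrightarrow> int_vec (\<psi> z)"
  obtains D where "int_mat D" "\<And>z. int_vec z \<Longrightarrow> \<psi> z = D *v z"
proof
  define D :: "real^'n^'m" where "D = (\<chi> i j. \<psi> (axis j 1) $ i)"
  show "int_mat D" using int[OF int_vec_axis] by (simp add: D_def int_mat_def int_vec_def)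
  fix z :: "real^'n" assume z: "int_vec z"
  have "\<psi> z = \<psi> (\<Sum>j\<in>UNIV. z $ j *\<^sub>R axis j 1)"
    using basis_expansion[of z] by (simp add: scalar_mult_eq_scaleR)
  also have "\<dots> = (\<Sum>j\<in>UNIV. \<psi> (z $ j *\<^sub>R axis j 1))"
    using z int_vec_scaleR[OF int_vec_axis] unfolding int_vec_def[of z]
    by (intro int_additive_sum[OF add]) auto
  also have "\<dots> = (\<Sum>j\<in>UNIV. z $ j *\<^sub>R \<psi> (axis j 1))"
  proof (rule sum.cong)
    fix j
    have "z $ j \<in> \<int>" using z by (simp add: int_vec_def)
    then obtain m where "z $ j = of_int m" by (rule Ints_cases)
    then show "\<psi> (z $ j *\<^sub>R axis j 1) = z $ j *\<^sub>R \<psi> (axis j 1)"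
      using int_additive_of_int_scaleR[OF add int_vec_axis] by simp
  qed simp
  also have "\<dots> = D *v z"
    by (simp add: matrix_mult_sum column_def D_def scalar_mult_eq_scaleR)
  finally show "\<psi> z = D *v z" .
qed

section \<open>Twisted conjugacy relative to a subgroup\<close>

definition twisted_class :: "('a, 'b) monoid_scheme \<Rightarrow> 'a set \<Rightarrow> ('a \<Rightarrow> 'a) \<Rightarrow> 'a \<Rightarrow> 'a set"
  where "twisted_class G H \<phi> g =
    {g' \<in> carrier G. \<exists>h\<in>H. g' = h \<otimes>\<^bsub>G\<^esub> g \<otimes>\<^bsub>G\<^esub> inv\<^bsub>G\<^esub> (\<phi> h)}"

lemma reid_classes_eq_twisted_classes:
  "reid_classes G \<phi> = twisted_class G (carrier G) \<phi> ` carrier G"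
  unfolding reid_classes_def twisted_class_def ..

lemma twisted_class_mono: "H \<subseteq> H' \<Longrightarrow> twisted_class G H \<phi> g \<subseteq> twisted_class G H' \<phi> g"
  unfolding twisted_class_def by auto

definition conj_class :: "('a, 'b) monoid_scheme \<Rightarrow> 'a \<Rightarrow> 'a set"
  where "conj_class G x = (\<lambda>h. h \<otimes>\<^bsub>G\<^esub> x \<otimes>\<^bsub>G\<^esub> inv\<^bsub>G\<^esub> h) ` carrier G"

context group
begin

lemma group_hom_of_hom: "group H \<Longrightarrow> \<phi> \<in> hom G H \<Longrightarrow> group_hom G H \<phi>"
  by (simp add: group_hom_def group_hom_axioms_def group_axioms)

lemma twisted_class_self:
  assumes "subgroup H G" "\<phi> \<in> hom G G" "g \<in> carrier G"
  shows "g \<in> twisted_class G H \<phi> g"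
proof -
  interpret \<phi>: group_hom G G \<phi> by (rule group_hom_of_hom[OF is_group assms(2)])
  have "g = \<one> \<otimes> g \<otimes> inv (\<phi> \<one>)" using assms(3) by simp
  moreover have "\<one> \<in> H" using assms(1) by (rule subgroup.one_closed)
  ultimately show ?thesis
    unfolding twisted_class_def using assms(3) by blast
qed

lemma twisted_class_subset:
  assumes H: "subgroup H G" and \<phi>: "\<phi> \<in> hom G G" and g: "g \<in> carrier G"
    and g': "g' \<in> twisted_class G H \<phi> g"
  shows "twisted_class G H \<phi> g' \<subseteq> twisted_class G H \<phi> g"
proof
  interpret \<phi>: group_hom G G \<phi> by (rule group_hom_of_hom[OF is_group \<phi>])
  obtain h where h: "h \<in> H" and g'_eq: "g' = h \<otimes> g \<otimes> inv (\<phi> h)"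
    using g' unfolding twisted_class_def by blast
  fix x assume "x \<in> twisted_class G H \<phi> g'"
  then obtain k where x: "x \<in> carrier G" and k: "k \<in> H" and x_eq: "x = k \<otimes> g' \<otimes> inv (\<phi> k)"
    unfolding twisted_class_def by blast
  have hG: "h \<in> carrier G" and kG: "k \<in> carrier G"
    using h k subgroup.subset[OF H] by blast+
  have "x = (k \<otimes> h) \<otimes> g \<otimes> inv (\<phi> (k \<otimes> h))"
    using hG kG g by (simp add: x_eq g'_eq m_assoc inv_mult_group)
  moreover have "k \<otimes> h \<in> H" using subgroup.m_closed[OF H k h] .
  ultimately show "x \<in> twisted_class G H \<phi> g"
    using x unfolding twisted_class_def by blast
qed

lemma twisted_class_sym:
  assumes H: "subgroup H G" and \<phi>: "\<phi> \<in> hom G G" and g: "g \<in> carrier G"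
    and g': "g' \<in> twisted_class G H \<phi> g"
  shows "g \<in> twisted_class G H \<phi> g'"
proof -
  interpret \<phi>: group_hom G G \<phi> by (rule group_hom_of_hom[OF is_group \<phi>])
  obtain h where h: "h \<in> H" and g'_eq: "g' = h \<otimes> g \<otimes> inv (\<phi> h)"
    using g' unfolding twisted_class_def by blast
  have hG: "h \<in> carrier G" using h subgroup.subset[OF H] by blast
  have "inv h \<otimes> g' \<otimes> inv (\<phi> (inv h)) = inv h \<otimes> (h \<otimes> (g \<otimes> (inv (\<phi> h) \<otimes> \<phi> h)))"
    using hG g by (simp add: g'_eq m_assoc \<phi>.hom_inv)
  also have "\<dots> = g" using hG g by (simp add: m_assoc[symmetric])
  finally show ?thesis
    using g subgroup.m_inv_closed[OF H h] unfolding twisted_class_def by force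
qed

lemma twisted_class_eq:
  assumes H: "subgroup H G" and \<phi>: "\<phi> \<in> hom G G" and g: "g \<in> carrier G"
    and g': "g' \<in> twisted_class G H \<phi> g"
  shows "twisted_class G H \<phi> g' = twisted_class G H \<phi> g"
proof
  show "twisted_class G H \<phi> g' \<subseteq> twisted_class G H \<phi> g"
    by (rule twisted_class_subset[OF assms])
  have "g' \<in> carrier G" using g' unfolding twisted_class_def by blast
  then show "twisted_class G H \<phi> g \<subseteq> twisted_class G H \<phi> g'"
    by (rule twisted_class_subset[OF H \<phi> _ twisted_class_sym[OF assms]])
qed

lemma twisted_class_eq_Union:
  assumes L: "subgroup L G" and H: "subgroup H G" and "L \<subseteq> H"
    and \<phi>: "\<phi> \<in> hom G G" and g: "g \<in> carrier G"
  shows "twisted_class G H \<phi> g = (\<Union>x\<in>twisted_class G L \<phi> g. twisted_class G H \<phi> x)"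
proof -
  have "twisted_class G H \<phi> x = twisted_class G H \<phi> g" if "x \<in> twisted_class G L \<phi> g" for x
    using that twisted_class_mono[OF \<open>L \<subseteq> H\<close>] twisted_class_eq[OF H \<phi> g] by blast
  then show ?thesis using twisted_class_self[OF L \<phi> g] by blast
qed

lemma card_reid_classes_le:
  assumes L: "subgroup L G" and \<phi>: "\<phi> \<in> hom G G"
    and fin: "finite (twisted_class G L \<phi> ` carrier G)"
  shows "finite (reid_classes G \<phi>)"
    and "card (reid_classes G \<phi>) \<le> card (twisted_class G L \<phi> ` carrier G)"
proof -
  have "reid_classes G \<phi> =
      (\<lambda>C. \<Union>x\<in>C. twisted_class G (carrier G) \<phi> x) ` (twisted_class G L \<phi> ` carrier G)"
    unfolding reid_classes_eq_twisted_classes image_image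
    using twisted_class_eq_Union[OF L subgroup_self subgroup.subset[OF L] \<phi>]
    by (intro image_cong) auto
  then show "finite (reid_classes G \<phi>)"
    and "card (reid_classes G \<phi>) \<le> card (twisted_class G L \<phi> ` carrier G)"
    using fin by (simp_all add: card_image_le)
qed

lemma finite_twisted_classes_subgroup:
  assumes L: "subgroup L G" and \<phi>: "\<phi> \<in> hom G G"
    and K: "finite K" "K \<subseteq> carrier G"
    and decomp: "\<And>h. h \<in> carrier G \<Longrightarrow> \<exists>l\<in>L. \<exists>k\<in>K. h = l \<otimes> k"
    and fin: "finite (reid_classes G \<phi>)"
  shows "finite (twisted_class G L \<phi> ` carrier G)"
proof -
  interpret \<phi>: group_hom G G \<phi> by (rule group_hom_of_hom[OF is_group \<phi>])
  have LG: "L \<subseteq> carrier G" by (rule subgroup.subset[OF L])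
  have split: "twisted_class G L \<phi> ` twisted_class G (carrier G) \<phi> g
      \<subseteq> (\<lambda>k. twisted_class G L \<phi> (k \<otimes> g \<otimes> inv (\<phi> k))) ` K" if g: "g \<in> carrier G" for g
  proof
    fix C assume "C \<in> twisted_class G L \<phi> ` twisted_class G (carrier G) \<phi> g"
    then obtain h where h: "h \<in> carrier G" and C: "C = twisted_class G L \<phi> (h \<otimes> g \<otimes> inv (\<phi> h))"
      unfolding twisted_class_def by blast
    obtain l k where l: "l \<in> L" and k: "k \<in> K" and hlk: "h = l \<otimes> k" using decomp[OF h] by blast
    have lG: "l \<in> carrier G" and kG: "k \<in> carrier G" using l k LG K by auto
    let ?y = "k \<otimes> g \<otimes> inv (\<phi> k)"
    have "h \<otimes> g \<otimes> inv (\<phi> h) = l \<otimes> ?y \<otimes> inv (\<phi> l)"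
      using lG kG g by (simp add: hlk m_assoc inv_mult_group)
    moreover have "h \<otimes> g \<otimes> inv (\<phi> h) \<in> carrier G" using g h by simp
    ultimately have "h \<otimes> g \<otimes> inv (\<phi> h) \<in> twisted_class G L \<phi> ?y"
      using l unfolding twisted_class_def by blast
    then have "C = twisted_class G L \<phi> ?y"
      unfolding C using kG g by (intro twisted_class_eq[OF L \<phi>]) simp_all
    then show "C \<in> (\<lambda>k. twisted_class G L \<phi> (k \<otimes> g \<otimes> inv (\<phi> k))) ` K" using k by blast
  qed
  have "twisted_class G L \<phi> ` carrier G
      \<subseteq> (\<Union>R\<in>reid_classes G \<phi>. twisted_class G L \<phi> ` R)"
    unfolding reid_classes_eq_twisted_classes
    using twisted_class_self[OF subgroup_self \<phi>] by blast
  moreover have "finite (\<Union>R\<in>reid_classes G \<phi>. twisted_class G L \<phi> ` R)"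
  proof (rule finite_UN_I[OF fin])
    fix R assume "R \<in> reid_classes G \<phi>"
    then obtain g where g: "g \<in> carrier G" and R: "R = twisted_class G (carrier G) \<phi> g"
      unfolding reid_classes_eq_twisted_classes by blast
    show "finite (twisted_class G L \<phi> ` R)"
      unfolding R by (rule finite_subset[OF split[OF g] finite_imageI[OF K(1)]])
  qed
  ultimately show ?thesis by (rule finite_subset)
qed

lemma hom_conj:
  assumes "group H" "\<phi> \<in> hom G H" "h \<in> carrier G" "x \<in> carrier G"
  shows "\<phi> (h \<otimes> x \<otimes> inv h) = \<phi> h \<otimes>\<^bsub>H\<^esub> \<phi> x \<otimes>\<^bsub>H\<^esub> inv\<^bsub>H\<^esub> (\<phi> h)"
proof -
  interpret \<phi>: group_hom G H \<phi> by (rule group_hom_of_hom[OF assms(1,2)])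
  show ?thesis using assms(3,4) by (simp add: \<phi>.hom_inv)
qed

lemma conj_class_iso:
  assumes "group H" "\<phi> \<in> iso G H" "x \<in> carrier G"
  shows "conj_class H (\<phi> x) = \<phi> ` conj_class G x"
proof -
  have carrier_H: "\<phi> ` carrier G = carrier H" using assms(2) by (simp add: iso_iff)
  have "conj_class H (\<phi> x) = (\<lambda>h. \<phi> h \<otimes>\<^bsub>H\<^esub> \<phi> x \<otimes>\<^bsub>H\<^esub> inv\<^bsub>H\<^esub> (\<phi> h)) ` carrier G"
    by (simp only: conj_class_def carrier_H[symmetric] image_image)
  also have "\<dots> = \<phi> ` conj_class G x"
    unfolding conj_class_def image_image using assms
    by (intro image_cong) (simp_all add: hom_conj iso_imp_homomorphism)
  finally show ?thesis .
qed

end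

section \<open>The affine group\<close>

lemma aff_mult_assoc: "aff_mult (aff_mult x y) w = aff_mult x (aff_mult y w)"
  by (simp add: aff_mult_def matrix_mul_assoc matrix_vector_mul_assoc
      matrix_vector_right_distrib add.assoc)

lemma mult_aff_group [simp]: "x \<otimes>\<^bsub>aff_group\<^esub> y = aff_mult x y"
  and one_aff_group [simp]: "\<one>\<^bsub>aff_group\<^esub> = (0, mat 1)"
  by (simp_all add: aff_group_def)

lemma aff_inv_mult: "invertible (snd g) \<Longrightarrow> aff_mult (aff_inv g) g = (0, mat 1)"
  by (auto simp: aff_mult_def aff_inv_def matrix_vector_mul_assoc matrix_inv_left vec.neg)

lemma aff_inv_in_aff_group: "g \<in> carrier aff_group \<Longrightarrow> aff_inv g \<in> carrier aff_group"
  by (simp add: aff_group_def aff_inv_def invertible_matrix_inv)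

lemma group_aff_group: "group (aff_group :: 'n::finite aff monoid)"
proof (rule groupI)
  fix x y :: "'n aff"
  assume "x \<in> carrier aff_group" "y \<in> carrier aff_group"
  then show "x \<otimes>\<^bsub>aff_group\<^esub> y \<in> carrier aff_group"
    by (simp add: aff_group_def aff_mult_def invertible_mult)
next
  fix x :: "'n aff" assume x: "x \<in> carrier aff_group"
  show "\<exists>y\<in>carrier aff_group. y \<otimes>\<^bsub>aff_group\<^esub> x = \<one>\<^bsub>aff_group\<^esub>"
    using aff_inv_in_aff_group[OF x] aff_inv_mult[of x] x
    by (intro bexI[of _ "aff_inv x"]) (simp_all add: aff_group_def)
qed (simp_all add: aff_group_def aff_mult_assoc, simp_all add: aff_mult_def invertible_def)

lemma inv_aff_group: "g \<in> carrier aff_group \<Longrightarrow> inv\<^bsub>aff_group\<^esub> g = aff_inv g"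
  using aff_inv_in_aff_group[of g] aff_inv_mult[of g]
  by (intro group.inv_equality[OF group_aff_group]) (simp_all add: aff_group_def)

lemma aff_conj_translation:
  assumes "invertible A"
  shows "aff_mult (aff_mult (a, A) (z, mat 1)) (aff_inv (a, A)) = (A *v z, mat 1)"
  using assms by (simp add: aff_mult_def aff_inv_def matrix_vector_mult_diff_distrib
      matrix_vector_mul_assoc matrix_inv_right vec.neg)

lemma aff_conj_by_translation:
  "aff_mult (aff_mult (v, mat 1) (b, B)) (aff_inv (v, mat 1)) = (v + b - B *v v, B)"
  by (simp add: aff_mult_def aff_inv_def vec.neg)

section \<open>Crystallographic groups\<close>

definition int_translations :: "'n::finite aff set"
  where "int_translations = {(z, mat 1) | z. int_vec z}"

definition acts_on_lattice_by :: "('n::finite aff \<Rightarrow> 'n aff) \<Rightarrow> real^'n^'n \<Rightarrow> bool"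
  where "acts_on_lattice_by \<phi> D \<longleftrightarrow> int_mat D \<and> (\<forall>z. int_vec z \<longrightarrow> \<phi> (z, mat 1) = (D *v z, mat 1))"

(* The elements (z, 1) g (D z, 1)^-1 with z integral. *)
definition lattice_twisted_class :: "real^'n^'n \<Rightarrow> 'n::finite aff \<Rightarrow> 'n aff set"
  where "lattice_twisted_class D g = {(z + fst g - snd g *v (D *v z), snd g) | z. int_vec z}"

lemma snd_mem_holonomy: "\<gamma> \<in> \<Gamma> \<Longrightarrow> snd \<gamma> \<in> holonomy \<Gamma>"
  unfolding holonomy_def by (cases \<gamma>) auto

locale crystallographic_group =
  fixes \<Gamma> :: "'n::finite aff set"
  assumes crystallographic: "crystallographic \<Gamma>"
begin

abbreviation G :: "'n aff monoid" where "G \<equiv> aff_group\<lparr>carrier := \<Gamma>\<rparr>"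

lemma subgroup_aff_group: "subgroup \<Gamma> aff_group"
  using crystallographic by (simp add: crystallographic_def)

lemma group_G: "group G"
  by (rule subgroup.subgroup_is_group[OF subgroup_aff_group group_aff_group])

lemma invertible_snd: "x \<in> \<Gamma> \<Longrightarrow> invertible (snd x)"
  using subgroup.subset[OF subgroup_aff_group] by (auto simp: aff_group_def)

lemma inv_G [simp]:
  assumes "x \<in> \<Gamma>"
  shows "inv\<^bsub>G\<^esub> x = aff_inv x"
proof -
  have "inv\<^bsub>G\<^esub> x = inv\<^bsub>aff_group\<^esub> x"
    by (rule group.m_inv_consistent[OF group_aff_group subgroup_aff_group assms])
  also have "\<dots> = aff_inv x"
    using assms subgroup.subset[OF subgroup_aff_group] by (intro inv_aff_group) blast
  finally show ?thesis .
qed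

lemma aff_mult_closed: "x \<in> \<Gamma> \<Longrightarrow> y \<in> \<Gamma> \<Longrightarrow> aff_mult x y \<in> \<Gamma>"
  using subgroup.m_closed[OF subgroup_aff_group] by (simp add: aff_group_def)

lemma aff_inv_closed: "x \<in> \<Gamma> \<Longrightarrow> aff_inv x \<in> \<Gamma>"
  using subgroup.m_inv_closed[OF subgroup_aff_group] inv_aff_group
    subgroup.subset[OF subgroup_aff_group] by fastforce

lemma translations_eq: "{\<gamma> \<in> \<Gamma>. snd \<gamma> = mat 1} = int_translations"
  using crystallographic by (simp add: crystallographic_def int_translations_def)

lemma translation_mem_iff: "(z, mat 1) \<in> \<Gamma> \<longleftrightarrow> int_vec z"
  using translations_eq by (auto simp: int_translations_def set_eq_iff)

lemma subgroup_int_translations: "subgroup int_translations G"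
proof
  show "int_translations \<subseteq> carrier G"
    using translations_eq by auto
  show "\<one>\<^bsub>G\<^esub> \<in> int_translations"
    by (auto simp: int_translations_def int_vec_zero)
next
  fix x y :: "'n aff" assume "x \<in> int_translations" "y \<in> int_translations"
  then show "x \<otimes>\<^bsub>G\<^esub> y \<in> int_translations"
    by (auto simp: int_translations_def aff_group_def aff_mult_def int_vec_add)
next
  fix x :: "'n aff" assume x: "x \<in> int_translations"
  then have "x \<in> \<Gamma>" using translations_eq by auto
  with x show "inv\<^bsub>G\<^esub> x \<in> int_translations"
    by (auto simp: int_translations_def aff_inv_def int_vec_minus)
qed

lemma conj_translation:
  "\<gamma> \<in> \<Gamma> \<Longrightarrow> aff_mult (aff_mult \<gamma> (z, mat 1)) (aff_inv \<gamma>) = (snd \<gamma> *v z, mat 1)"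
  using aff_conj_translation[of "snd \<gamma>" "fst \<gamma>"] invertible_snd by simp

lemma holonomy_int_mat:
  assumes "A \<in> holonomy \<Gamma>"
  shows "int_mat A"
proof -
  obtain a where aA: "(a, A) \<in> \<Gamma>" using assms by (auto simp: holonomy_def)
  have "(A *v axis j 1, mat 1) \<in> \<Gamma>" for j
    using conj_translation[OF aA, of "axis j 1"] aA
    by (metis aff_inv_closed aff_mult_closed int_vec_axis snd_conv translation_mem_iff)
  then show ?thesis
    unfolding int_mat_def translation_mem_iff int_vec_def
    by (metis matrix_vector_mult_basis column_def vec_lambda_beta)
qed

lemma finite_holonomy: "finite (holonomy \<Gamma>)"
proof -
  obtain g where g: "g \<in> carrier aff_group"
    and iso: "crystallographic_iso ((\<lambda>\<gamma>. aff_mult g (aff_mult \<gamma> (aff_inv g))) ` \<Gamma>)"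
    using crystallographic by (auto simp: crystallographic_def)
  define P where "P = snd g"
  have P: "invertible P" using g by (simp add: aff_group_def P_def)
  define c where "c = onorm ((*v) (matrix_inv P)) * onorm ((*v) P)"
  have "\<bar>A $ i $ j\<bar> \<le> c" if "(a, A) \<in> \<Gamma>" for a A i j
  proof -
    have "orthogonal_matrix (snd (aff_mult g (aff_mult (a, A) (aff_inv g))))"
      using iso that by (auto simp: crystallographic_iso_def)
    then have "orthogonal_matrix (P ** A ** matrix_inv P)"
      by (simp add: aff_mult_def aff_inv_def P_def matrix_mul_assoc)
    then show ?thesis unfolding c_def by (rule abs_entry_le_if_conj_orthogonal[OF P])
  qed
  then have "holonomy \<Gamma> \<subseteq> {A. int_mat A \<and> (\<forall>i j. \<bar>A $ i $ j\<bar> \<le> c)}"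
    using holonomy_int_mat unfolding holonomy_def by blast
  then show ?thesis using finite_bounded_int_mat finite_subset by blast
qed

lemma finite_transversal:
  obtains K where "finite K" "K \<subseteq> \<Gamma>" "\<And>h. h \<in> \<Gamma> \<Longrightarrow> \<exists>l\<in>int_translations. \<exists>k\<in>K. h = aff_mult l k"
proof -
  have "\<forall>A\<in>holonomy \<Gamma>. \<exists>\<gamma>\<in>\<Gamma>. snd \<gamma> = A" by (force simp: holonomy_def)
  then obtain rep where rep: "\<And>A. A \<in> holonomy \<Gamma> \<Longrightarrow> rep A \<in> \<Gamma> \<and> snd (rep A) = A"
    by metis
  show ?thesis
  proof
    show "finite (rep ` holonomy \<Gamma>)" using finite_holonomy by simp
    show "rep ` holonomy \<Gamma> \<subseteq> \<Gamma>" using rep by auto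
  next
    fix h assume h: "h \<in> \<Gamma>"
    then have hol: "snd h \<in> holonomy \<Gamma>" by (rule snd_mem_holonomy)
    define k where "k = rep (snd h)"
    have k: "k \<in> \<Gamma>" "snd k = snd h" using rep[OF hol] by (simp_all add: k_def)
    define l where "l = aff_mult h (aff_inv k)"
    have "l \<in> \<Gamma>" using h k by (simp add: l_def aff_mult_closed aff_inv_closed)
    moreover have "snd l = mat 1"
      using k invertible_snd[OF h] by (simp add: l_def aff_mult_def aff_inv_def matrix_inv_right)
    ultimately have "l \<in> int_translations" using translations_eq by blast
    moreover have "h = aff_mult l k"
      using invertible_snd[OF k(1)] by (simp add: l_def aff_mult_assoc aff_inv_mult)
         (simp add: aff_mult_def)
    ultimately show "\<exists>l\<in>int_translations. \<exists>k\<in>rep ` holonomy \<Gamma>. h = aff_mult l k"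
      using hol k_def by blast
  qed
qed

lemma conj_class_G: "conj_class G x = (\<lambda>h. aff_mult (aff_mult h x) (aff_inv h)) ` \<Gamma>"
  unfolding conj_class_def by (auto intro!: image_cong)

lemma finite_conj_class_translation:
  assumes "int_vec z"
  shows "finite (conj_class G (z, mat 1))"
proof -
  have "conj_class G (z, mat 1) \<subseteq> (\<lambda>A. (A *v z, mat 1)) ` holonomy \<Gamma>"
    unfolding conj_class_G using snd_mem_holonomy by (auto simp: conj_translation)
  then show ?thesis using finite_holonomy finite_subset by blast
qed

lemma infinite_conj_class_non_translation:
  assumes y: "y \<in> \<Gamma>" and B: "snd y \<noteq> mat 1"
  shows "infinite (conj_class G y)"
proof
  assume fin: "finite (conj_class G y)"
  obtain b B where y_eq: "y = (b, B)" by (cases y)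
  obtain j where j: "B *v axis j 1 \<noteq> axis j 1"
    using B y_eq matrix_eq_on_axes[of B "mat 1"] by auto
  define w where "w = axis j 1 - B *v axis j 1"
  have "w \<noteq> 0" using j by (simp add: w_def)
  define f where "f k = (b + real k *\<^sub>R w, B)" for k :: nat
  have "inj f"
    using \<open>w \<noteq> 0\<close> by (auto simp: f_def inj_def scaleR_cancel_right)
  moreover have "range f \<subseteq> conj_class G y"
  proof
    fix x assume "x \<in> range f"
    then obtain k where x: "x = f k" by blast
    define v where "v = real k *\<^sub>R axis j (1 :: real)"
    have "(v, mat 1) \<in> \<Gamma>"
      unfolding v_def translation_mem_iff by (intro int_vec_scaleR int_vec_axis) simp
    moreover have "x = aff_mult (aff_mult (v, mat 1) y) (aff_inv (v, mat 1))"
      by (simp add: x f_def y_eq aff_conj_by_translation v_def w_def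
          matrix_vector_mult_scaleR scaleR_diff_right)
    ultimately show "x \<in> conj_class G y" unfolding conj_class_G by blast
  qed
  ultimately show False using fin finite_subset[OF _ fin] finite_imageD[of f UNIV] by auto
qed

lemma aut_translation:
  assumes \<phi>: "\<phi> \<in> iso G G" and z: "int_vec z"
  obtains w where "\<phi> (z, mat 1) = (w, mat 1)" "int_vec w"
proof -
  have zG: "(z, mat 1) \<in> \<Gamma>" using z translation_mem_iff by blast
  then have \<phi>z: "\<phi> (z, mat 1) \<in> \<Gamma>" using \<phi> by (auto simp: iso_iff)
  have "finite (conj_class G (\<phi> (z, mat 1)))"
    using group.conj_class_iso[OF group_G group_G \<phi>] zG finite_conj_class_translation[OF z] by simp
  then have "snd (\<phi> (z, mat 1)) = mat 1"
    using infinite_conj_class_non_translation[OF \<phi>z] by blast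
  then show ?thesis
    using that \<phi>z translation_mem_iff by (metis prod.collapse)
qed

lemma ex_acts_on_lattice_by:
  assumes \<phi>: "\<phi> \<in> iso G G"
  obtains D where "acts_on_lattice_by \<phi> D"
proof -
  define \<psi> where "\<psi> z = fst (\<phi> (z, mat 1))" for z
  have \<psi>: "\<phi> (z, mat 1) = (\<psi> z, mat 1)" "int_vec (\<psi> z)" if "int_vec z" for z
    using aut_translation[OF \<phi> that] by (metis fst_conv \<psi>_def)+
  have "\<psi> (z + w) = \<psi> z + \<psi> w" if z: "int_vec z" and w: "int_vec w" for z w
  proof -
    have "(z + w, mat 1) = (z, mat 1) \<otimes>\<^bsub>G\<^esub> (w, mat 1)" by (simp add: aff_mult_def)
    then have "\<phi> (z + w, mat 1) = aff_mult (\<phi> (z, mat 1)) (\<phi> (w, mat 1))"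
      using hom_mult[OF iso_imp_homomorphism[OF \<phi>]] z w translation_mem_iff by simp
    then show ?thesis using \<psi> z w int_vec_add[OF z w] by (simp add: aff_mult_def)
  qed
  then obtain D where "int_mat D" "\<And>z. int_vec z \<Longrightarrow> \<psi> z = D *v z"
    using int_additive_eq_matrix[of \<psi>] \<psi>(2) by blast
  then have "acts_on_lattice_by \<phi> D" using \<psi>(1) by (simp add: acts_on_lattice_by_def)
  then show ?thesis by (rule that)
qed

lemma acts_on_lattice_by_inverse:
  assumes \<phi>: "\<phi> \<in> iso G G" and D: "acts_on_lattice_by \<phi> D"
    and D': "acts_on_lattice_by (inv_into \<Gamma> \<phi>) D'"
  shows "D ** D' = mat 1"
proof (rule matrix_eq_on_axes)
  fix j
  let ?e = "axis j (1 :: real) :: real^'n"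
  have "(?e, mat 1) \<in> \<phi> ` \<Gamma>"
    using \<phi> translation_mem_iff int_vec_axis by (auto simp: iso_iff)
  then have "(?e, mat 1) = \<phi> (inv_into \<Gamma> \<phi> (?e, mat 1))" by (simp add: f_inv_into_f)
  also have "inv_into \<Gamma> \<phi> (?e, mat 1) = (D' *v ?e, mat 1)"
    using D' int_vec_axis unfolding acts_on_lattice_by_def by blast
  also have "\<phi> (D' *v ?e, mat 1) = (D *v (D' *v ?e), mat 1)"
    using D D' int_mat_mult_int_vec[OF _ int_vec_axis] unfolding acts_on_lattice_by_def by blast
  finally show "(D ** D') *v ?e = mat 1 *v ?e" by (simp add: matrix_vector_mul_assoc)
qed

lemma acts_on_lattice_by_conj_holonomy:
  assumes \<phi>: "\<phi> \<in> iso G G" and D: "acts_on_lattice_by \<phi> D" and E: "D ** E = mat 1"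
    and A: "A \<in> holonomy \<Gamma>"
  shows "D ** A ** E \<in> holonomy \<Gamma>"
proof -
  obtain a where aA: "(a, A) \<in> \<Gamma>" using A by (auto simp: holonomy_def)
  define p where "p = \<phi> (a, A)"
  have p: "p \<in> \<Gamma>" using \<phi> aA by (auto simp: iso_iff p_def)
  have "snd p *v (D *v z) = D *v (A *v z)" if z: "int_vec z" for z
  proof -
    have zG: "(z, mat 1) \<in> \<Gamma>" using z translation_mem_iff by blast
    have "(D *v (A *v z), mat 1) = \<phi> (aff_mult (aff_mult (a, A) (z, mat 1)) (aff_inv (a, A)))"
      using D int_mat_mult_int_vec[OF holonomy_int_mat[OF A] z] conj_translation[OF aA]
      by (simp add: acts_on_lattice_by_def)
    also have "\<dots> = aff_mult (aff_mult p (\<phi> (z, mat 1))) (aff_inv p)"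
      using group.hom_conj[OF group_G group_G iso_imp_homomorphism[OF \<phi>], of "(a, A)" "(z, mat 1)"]
        aA zG p p_def by simp
    also have "\<dots> = (snd p *v (D *v z), mat 1)"
      using D z conj_translation[OF p] by (simp add: acts_on_lattice_by_def)
    finally show ?thesis by simp
  qed
  then have "snd p ** D = D ** A"
    by (intro matrix_eq_on_axes) (simp add: matrix_vector_mul_assoc[symmetric] int_vec_axis)
  then have "D ** A ** E = snd p"
    by (metis E matrix_mul_assoc matrix_mul_rid)
  then show ?thesis using snd_mem_holonomy[OF p] by simp
qed

lemma acts_on_lattice_by_normaliser:
  assumes \<phi>: "\<phi> \<in> iso G G" and D: "acts_on_lattice_by \<phi> D"
  shows "D \<in> normaliser_GLZ (holonomy \<Gamma>)"
proof -
  have \<phi>': "inv_into \<Gamma> \<phi> \<in> iso G G"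
    using group.iso_set_sym[OF group_G \<phi>] by simp
  obtain D' where D': "acts_on_lattice_by (inv_into \<Gamma> \<phi>) D'"
    using ex_acts_on_lattice_by[OF \<phi>'] by blast
  have DD': "D ** D' = mat 1" by (rule acts_on_lattice_by_inverse[OF \<phi> D D'])
  then have D'D: "D' ** D = mat 1" using matrix_left_right_inverse by blast
  have inv_D: "matrix_inv D = D'" by (rule matrix_inv_unique[OF DD'])
  have "D \<in> GL_Z"
    using D D' DD' D'D inv_D by (auto simp: GL_Z_def acts_on_lattice_by_def invertible_def)
  moreover have "B = D ** (D' ** B ** D) ** D'" for B
    by (simp add: matrix_mul_assoc DD') (simp add: matrix_mul_assoc[symmetric] DD')
  then have "(\<lambda>A. D ** A ** matrix_inv D) ` holonomy \<Gamma> = holonomy \<Gamma>"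
    using acts_on_lattice_by_conj_holonomy[OF \<phi> D DD']
      acts_on_lattice_by_conj_holonomy[OF \<phi>' D' D'D] inv_D by (auto intro!: image_eqI)
  ultimately show ?thesis by (simp add: normaliser_GLZ_def)
qed

lemma twisted_class_int_translations:
  assumes \<phi>: "\<phi> \<in> iso G G" and D: "acts_on_lattice_by \<phi> D" and g: "g \<in> \<Gamma>"
  shows "twisted_class G int_translations \<phi> g = lattice_twisted_class D g"
proof -
  have "(z, mat 1) \<otimes>\<^bsub>G\<^esub> g \<otimes>\<^bsub>G\<^esub> inv\<^bsub>G\<^esub> (\<phi> (z, mat 1)) = (z + fst g - snd g *v (D *v z), snd g)"
    and "(z + fst g - snd g *v (D *v z), snd g) \<in> \<Gamma>"
    if z: "int_vec z" for z
  proof -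
    have zG: "(z, mat 1) \<in> \<Gamma>" and DzG: "(D *v z, mat 1) \<in> \<Gamma>"
      and \<phi>z: "\<phi> (z, mat 1) = (D *v z, mat 1)"
      using D z int_mat_mult_int_vec translation_mem_iff by (auto simp: acts_on_lattice_by_def)
    have eq: "aff_mult (aff_mult (z, mat 1) g) (aff_inv (D *v z, mat 1))
        = (z + fst g - snd g *v (D *v z), snd g)"
      by (simp add: aff_mult_def aff_inv_def vec.neg)
    show "(z, mat 1) \<otimes>\<^bsub>G\<^esub> g \<otimes>\<^bsub>G\<^esub> inv\<^bsub>G\<^esub> (\<phi> (z, mat 1))
        = (z + fst g - snd g *v (D *v z), snd g)"
      using DzG \<phi>z eq by simp
    show "(z + fst g - snd g *v (D *v z), snd g) \<in> \<Gamma>"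
      unfolding eq[symmetric] using zG DzG g by (intro aff_mult_closed aff_inv_closed)
  qed
  then show ?thesis
    unfolding twisted_class_def lattice_twisted_class_def int_translations_def by auto
qed

lemma reid_number_bounded:
  assumes \<phi>: "\<phi> \<in> iso G G" and D: "acts_on_lattice_by \<phi> D"
  shows "reid_number G \<phi> \<in> insert \<infinity> (enat ` {..card (lattice_twisted_class D ` \<Gamma>)})"
proof (cases "finite (reid_classes G \<phi>)")
  case True
  have hom: "\<phi> \<in> hom G G" by (rule iso_imp_homomorphism[OF \<phi>])
  obtain K where K: "finite K" "K \<subseteq> \<Gamma>"
    and decomp: "\<And>h. h \<in> \<Gamma> \<Longrightarrow> \<exists>l\<in>int_translations. \<exists>k\<in>K. h = aff_mult l k"
    using finite_transversal by blast
  have classes: "twisted_class G int_translations \<phi> ` carrier G = lattice_twisted_class D ` \<Gamma>"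
    using twisted_class_int_translations[OF \<phi> D] by simp
  have "finite (twisted_class G int_translations \<phi> ` carrier G)"
    by (rule group.finite_twisted_classes_subgroup[OF group_G subgroup_int_translations hom K(1)])
      (use K(2) decomp True in auto)
  then have "card (reid_classes G \<phi>) \<le> card (lattice_twisted_class D ` \<Gamma>)"
    using group.card_reid_classes_le(2)[OF group_G subgroup_int_translations hom] classes by simp
  then show ?thesis using True by (simp add: reid_number_def)
qed (simp add: reid_number_def)

end

theorem theorem5p6:
  fixes \<Gamma> :: "'n::finite aff set"
  assumes "crystallographic \<Gamma>"
    and "finite (normaliser_GLZ (holonomy \<Gamma>))"
  shows "finite (reid_spectrum (aff_group\<lparr>carrier := \<Gamma>\<rparr>))"
proof -
  interpret crystallographic_group \<Gamma> by (rule crystallographic_group.intro[OF assms(1)])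
  define N where "N = normaliser_GLZ (holonomy \<Gamma>)"
  define M where "M = (\<Sum>D\<in>N. card (lattice_twisted_class D ` \<Gamma>))"
  have "reid_spectrum G \<subseteq> insert \<infinity> (enat ` {..M})"
  proof
    fix r assume "r \<in> reid_spectrum G"
    then obtain \<phi> where \<phi>: "\<phi> \<in> iso G G" and r: "r = reid_number G \<phi>"
      by (auto simp: reid_spectrum_def)
    obtain D where D: "acts_on_lattice_by \<phi> D" by (rule ex_acts_on_lattice_by[OF \<phi>])
    have "card (lattice_twisted_class D ` \<Gamma>) \<le> M"
      unfolding M_def using acts_on_lattice_by_normaliser[OF \<phi> D] assms(2)
      by (intro member_le_sum) (simp_all add: N_def)
    then show "r \<in> insert \<infinity> (enat ` {..M})"
      using reid_number_bounded[OF \<phi> D] r by auto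
  qed
  then show ?thesis by (rule finite_subset) simp
qed

end
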